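(* Let $p$ and $p'$ be ordered quadruples of distinct points of $\partial\mathbf H^n_{\mathbb C}$. Then there exists an anti-holomorphic isometry of $\mathbf H^n_{\mathbb C}$ mapping $p_i$ to $p'_i$ for each $i$ if and only if the normalized Gram matrix of $p'$ is the complex conjugate of the normalized Gram matrix of $p$.
   Context: $\mathbb C^{n,1}$ is $\mathbb C^{n+1}$ with the Hermitian form $\langle Z,W\rangle=z_1\overline{w}_{n+1}+z_2\overline{w}_2+\cdots+z_n\overline{w}_n+z_{n+1}\overline{w}_1$; $\mathbf H^n_{\mathbb C}$ and $\partial\mathbf H^n_{\mathbb C}$ are the negative and null lines in $\mathbb P\mathbb C^n$. The full isometry group is generated by $\mathrm{PU}(n,1)$ and complex conjugation; anti-holomorphic isometries are those not in $\mathrm{PU}(n,1)$. For a quadruple with null lifts $P_i$, a Gram matrix is $(\langle P_i,P_j\rangle)$; the normalized Gram matrix of $p$ is the unique Gram matrix $G=(g_{ij})$ (for suitable lifts) with $g_{ii}=0$, $g_{12}=g_{23}=g_{34}=1$, $|g_{13}|=1$. *)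

theory Defs
  imports Complex_Main
begin

text \<open>Vectors of C^{n,1} are modelled as functions nat => complex; only the
coordinates 1..n+1 are relevant.  Matrices are nat => nat => complex, acting on
coordinates 1..n+1.\<close>

definition herm :: "nat \<Rightarrow> (nat \<Rightarrow> complex) \<Rightarrow> (nat \<Rightarrow> complex) \<Rightarrow> complex" where
  "herm n Z W = Z 1 * cnj (W (n+1)) + (\<Sum>k\<in>{2..n}. Z k * cnj (W k)) + Z (n+1) * cnj (W 1)"

text \<open>A nonzero null vector: a lift of a point of the boundary of complex hyperbolic n-space.\<close>
definition null_lift :: "nat \<Rightarrow> (nat \<Rightarrow> complex) \<Rightarrow> bool" where
  "null_lift n P \<longleftrightarrow> herm n P P = 0 \<and> (\<exists>k\<in>{1..n+1}. P k \<noteq> 0)"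

definition same_line :: "nat \<Rightarrow> (nat \<Rightarrow> complex) \<Rightarrow> (nat \<Rightarrow> complex) \<Rightarrow> bool" where
  "same_line n P Q \<longleftrightarrow> (\<exists>c. c \<noteq> 0 \<and> (\<forall>k\<in>{1..n+1}. Q k = c * P k))"

definition mat_vec :: "nat \<Rightarrow> (nat \<Rightarrow> nat \<Rightarrow> complex) \<Rightarrow> (nat \<Rightarrow> complex) \<Rightarrow> (nat \<Rightarrow> complex)" where
  "mat_vec n A Z = (\<lambda>k. \<Sum>j\<in>{1..n+1}. A k j * Z j)"

definition in_U :: "nat \<Rightarrow> (nat \<Rightarrow> nat \<Rightarrow> complex) \<Rightarrow> bool" where
  "in_U n A \<longleftrightarrow> (\<forall>Z W. herm n (mat_vec n A Z) (mat_vec n A W) = herm n Z W)"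

definition conj_vec :: "(nat \<Rightarrow> complex) \<Rightarrow> (nat \<Rightarrow> complex)" where
  "conj_vec Z = (\<lambda>k. cnj (Z k))"

text \<open>The anti-holomorphic isometries are exactly the maps [Z] |-> [A (conj Z)] with A in U(n,1)
(elements of PU(n,1) composed with complex conjugation).\<close>
definition antiholo_maps :: "nat \<Rightarrow> (nat \<Rightarrow> nat \<Rightarrow> complex) \<Rightarrow> (nat \<Rightarrow> complex) \<Rightarrow> (nat \<Rightarrow> complex) \<Rightarrow> bool" where
  "antiholo_maps n A P Q \<longleftrightarrow> same_line n (mat_vec n A (conj_vec P)) Q"

text \<open>Quadruples: p i for i in {1..4} are lifts of the four points.\<close>
definition distinct_boundary_quadruple :: "nat \<Rightarrow> (nat \<Rightarrow> nat \<Rightarrow> complex) \<Rightarrow> bool" where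
  "distinct_boundary_quadruple n p \<longleftrightarrow>
     (\<forall>i\<in>{1..4}. null_lift n (p i)) \<and>
     (\<forall>i\<in>{1..4}. \<forall>j\<in>{1..4}. i \<noteq> j \<longrightarrow> \<not> same_line n (p i) (p j))"

definition is_norm_gram :: "nat \<Rightarrow> (nat \<Rightarrow> nat \<Rightarrow> complex) \<Rightarrow> (nat \<Rightarrow> nat \<Rightarrow> complex) \<Rightarrow> bool" where
  "is_norm_gram n p G \<longleftrightarrow>
     (\<exists>c::nat \<Rightarrow> complex. (\<forall>i\<in>{1..4}. c i \<noteq> 0) \<and>
        (\<forall>i\<in>{1..4}. \<forall>j\<in>{1..4}. G i j = herm n (\<lambda>k. c i * p i k) (\<lambda>k. c j * p j k))) \<and>
     (\<forall>i j. (i \<notin> {1..4} \<or> j \<notin> {1..4}) \<longrightarrow> G i j = 0) \<and>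
     (\<forall>i\<in>{1..4}. G i i = 0) \<and>
     G 1 2 = 1 \<and> G 2 3 = 1 \<and> G 3 4 = 1 \<and> cmod (G 1 3) = 1"

definition norm_gram :: "nat \<Rightarrow> (nat \<Rightarrow> nat \<Rightarrow> complex) \<Rightarrow> (nat \<Rightarrow> nat \<Rightarrow> complex)" where
  "norm_gram n p = (THE G. is_norm_gram n p G)"

end

theory Submission
  imports Defs
begin

text \<open>Write \<open>\<langle>_,_\<rangle>\<close> for the Hermitian form. An anti-holomorphic isometry \<open>[Z] \<mapsto> [A Z\<^sup>-]\<close>
  conjugates every Hermitian product, so it carries lifts realizing the normalized Gram matrix of
  \<open>p\<close> to lifts of \<open>p'\<close> with the conjugate Gram matrix; and the normalized Gram matrix is unique,
  because distinct boundary points are never orthogonal and the normalization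
  \<open>g\<^sub>1\<^sub>2 = g\<^sub>2\<^sub>3 = g\<^sub>3\<^sub>4 = 1\<close>, \<open>|g\<^sub>1\<^sub>3| = 1\<close> determines the lifts up to a common unimodular factor.

  Conversely, if the Gram matrices are conjugate, the conjugated lifts of \<open>p\<close> and the lifts of
  \<open>p'\<close> have equal Gram matrices, and a version of Witt's theorem gives \<open>A \<in> U(n,1)\<close> mapping one
  family to the other. It is built from unitary reflections \<open>Z \<mapsto> Z + \<alpha>\<langle>Z,u\<rangle>u\<close>: first the
  negative vector \<open>P\<^sub>1 - P\<^sub>2\<close> is placed, then the lifts one at a time, each time reflecting in a vector
  orthogonal to a negative vector, hence positive.\<close>

lemma herm_add_left: "herm n (\<lambda>k. X k + Y k) W = herm n X W + herm n Y W"
  unfolding herm_def by (simp add: sum.distrib algebra_simps)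

lemma herm_add_right: "herm n W (\<lambda>k. X k + Y k) = herm n W X + herm n W Y"
  unfolding herm_def by (simp add: sum.distrib algebra_simps)

lemma herm_diff_left: "herm n (\<lambda>k. X k - Y k) W = herm n X W - herm n Y W"
  unfolding herm_def by (simp add: sum_subtractf algebra_simps)

lemma herm_diff_right: "herm n W (\<lambda>k. X k - Y k) = herm n W X - herm n W Y"
  unfolding herm_def by (simp add: sum_subtractf algebra_simps)

lemma herm_scale_left: "herm n (\<lambda>k. a * X k) W = a * herm n X W"
  unfolding herm_def by (simp add: sum_distrib_left algebra_simps)

lemma herm_scale_right: "herm n W (\<lambda>k. a * X k) = cnj a * herm n W X"
  unfolding herm_def by (simp add: sum_distrib_left algebra_simps)

lemma herm_commute: "herm n Y X = cnj (herm n X Y)"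
  unfolding herm_def by (simp add: algebra_simps)

lemma herm_conj_vec: "herm n (conj_vec X) (conj_vec Y) = cnj (herm n X Y)"
  unfolding herm_def conj_vec_def by simp

lemma herm_self_real: "herm n X X = complex_of_real (Re (herm n X X))"
  using herm_commute[of n X X] by (simp add: complex_eq_iff)

definition vec_eq :: "nat \<Rightarrow> (nat \<Rightarrow> complex) \<Rightarrow> (nat \<Rightarrow> complex) \<Rightarrow> bool" where
  "vec_eq n X Y \<longleftrightarrow> (\<forall>k\<in>{1..n+1}. X k = Y k)"

lemma herm_cong:
  assumes "vec_eq n X X'" "vec_eq n Y Y'"
  shows "herm n X Y = herm n X' Y'"
proof -
  have "(\<Sum>k\<in>{2..n}. X k * cnj (Y k)) = (\<Sum>k\<in>{2..n}. X' k * cnj (Y' k))"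
    using assms unfolding vec_eq_def by (intro sum.cong) auto
  then show ?thesis using assms unfolding herm_def vec_eq_def by auto
qed

lemma coord_cases:
  fixes k n :: nat
  assumes "k \<in> {1..n+1}"
  obtains "k = 1" | "k \<in> {2..n}" | "k = n+1"
  using assms by fastforce

lemma herm_self_if_first_zero:
  assumes "w 1 = 0"
  shows "herm n w w = complex_of_real (\<Sum>k\<in>{2..n}. (cmod (w k))\<^sup>2)"
  using assms unfolding herm_def by (simp add: complex_norm_square del: of_real_power)

lemma herm_self_nonneg_if_first_zero: "w 1 = 0 \<Longrightarrow> Re (herm n w w) \<ge> 0"
  by (simp add: herm_self_if_first_zero sum_nonneg)

lemma middle_zero_if_herm_self_zero:
  assumes "w 1 = 0" "herm n w w = 0" "k \<in> {2..n}"
  shows "w k = 0"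
proof -
  have "(\<Sum>k\<in>{2..n}. (cmod (w k))\<^sup>2) = 0"
    using assms(1,2) by (simp add: herm_self_if_first_zero del: of_real_sum)
  then show ?thesis using assms(3) by (simp add: sum_nonneg_eq_0_iff)
qed

lemma herm_if_first_middle_zero:
  assumes "w 1 = 0" "\<forall>k\<in>{2..n}. w k = 0"
  shows "herm n w v = w (n+1) * cnj (v 1)"
  using assms unfolding herm_def by simp

lemma vanishes_if_isotropic_orthogonal:
  assumes w1: "w 1 = 0" and ww: "herm n w w = 0" and wv: "herm n w v = 0" and v1: "v 1 \<noteq> 0"
  shows "\<forall>k\<in>{1..n+1}. w k = 0"
proof -
  have mid: "\<forall>k\<in>{2..n}. w k = 0"
    using middle_zero_if_herm_self_zero[OF w1 ww] by blast
  have "w (n+1) = 0"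
    using wv v1 herm_if_first_middle_zero[OF w1 mid, of v] by simp
  with w1 mid show ?thesis by (metis coord_cases)
qed

lemma herm_line_expand:
  "herm n (\<lambda>k. u k + t * v k) (\<lambda>k. u k + t * v k) =
     herm n u u + cnj t * herm n u v + t * herm n v u + t * cnj t * herm n v v"
  by (simp add: herm_add_left herm_add_right herm_scale_left herm_scale_right algebra_simps)

text \<open>Adding the multiple of \<open>v\<close> that kills the first coordinate of \<open>u\<close> lands in the region
  where the form is positive semidefinite.\<close>

lemma orthogonal_to_negative_imp_positive:
  assumes vneg: "Re (herm n v v) < 0" and uv: "herm n u v = 0"
    and unz: "\<exists>k\<in>{1..n+1}. u k \<noteq> 0"
  shows "Re (herm n u u) > 0"
proof (rule ccontr)
  assume nonpos: "\<not> Re (herm n u u) > 0"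
  have v1: "v 1 \<noteq> 0"
    using vneg herm_self_nonneg_if_first_zero[of v n] by fastforce
  define t where "t = - u 1 / v 1"
  define w where "w = (\<lambda>k. u k + t * v k)"
  have w1: "w 1 = 0" using v1 by (simp add: w_def t_def)
  have vu: "herm n v u = 0" using herm_commute[of n v u] uv by simp
  have "herm n w w = herm n u u + complex_of_real ((cmod t)\<^sup>2) * herm n v v"
    unfolding w_def herm_line_expand using uv vu
    by (simp add: complex_norm_square[symmetric] del: of_real_power)
  then have Re_w: "Re (herm n w w) = Re (herm n u u) + (cmod t)\<^sup>2 * Re (herm n v v)"
    by simp
  have "(cmod t)\<^sup>2 * Re (herm n v v) \<ge> 0"
    using Re_w herm_self_nonneg_if_first_zero[of w n, OF w1] nonpos by linarith
  then have t0: "t = 0" using vneg by (simp add: zero_le_mult_iff)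
  then have "w = u" by (simp add: w_def)
  have "Re (herm n u u) = 0"
    using Re_w t0 nonpos herm_self_nonneg_if_first_zero[of w n, OF w1] by simp
  then have "herm n u u = 0" using herm_self_real[of n u] by simp
  with \<open>w = u\<close> w1 uv v1 have "\<forall>k\<in>{1..n+1}. u k = 0"
    using vanishes_if_isotropic_orthogonal by metis
  with unz show False by blast
qed

lemma null_orthogonal_imp_same_line:
  assumes u: "null_lift n u" and v: "null_lift n v" and uv: "herm n u v = 0"
  shows "same_line n u v"
proof (cases "v 1 = 0")
  case v1: True
  have uu: "herm n u u = 0" and vv: "herm n v v = 0"
    using u v unfolding null_lift_def by auto
  have vmid: "\<forall>k\<in>{2..n}. v k = 0"
    using middle_zero_if_herm_self_zero[OF v1 vv] by blast
  have vn: "v (n+1) \<noteq> 0" using v v1 vmid unfolding null_lift_def by (metis coord_cases)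
  have "herm n v u = v (n+1) * cnj (u 1)" by (rule herm_if_first_middle_zero[OF v1 vmid])
  then have u1: "u 1 = 0" using uv vn herm_commute[of n v u] by simp
  have umid: "\<forall>k\<in>{2..n}. u k = 0"
    using middle_zero_if_herm_self_zero[OF u1 uu] by blast
  have un: "u (n+1) \<noteq> 0" using u u1 umid unfolding null_lift_def by (metis coord_cases)
  show ?thesis unfolding same_line_def
  proof (intro exI[of _ "v (n+1) / u (n+1)"] conjI ballI)
    fix k assume "k \<in> {1..n+1}"
    then show "v k = v (n+1) / u (n+1) * u k"
      by (cases rule: coord_cases) (use u1 v1 umid vmid un in auto)
  qed (use un vn in simp)
next
  case v1: False
  define t where "t = - u 1 / v 1"
  define w where "w = (\<lambda>k. u k + t * v k)"
  have uu: "herm n u u = 0" and vv: "herm n v v = 0"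
    using u v unfolding null_lift_def by auto
  have vu: "herm n v u = 0" using herm_commute[of n v u] uv by simp
  have w1: "w 1 = 0" using v1 by (simp add: w_def t_def)
  have ww: "herm n w w = 0" unfolding w_def herm_line_expand using uu vv uv vu by simp
  have wv: "herm n w v = 0" unfolding w_def herm_add_left herm_scale_left using uv vv by simp
  have u_eq: "\<forall>k\<in>{1..n+1}. u k = - t * v k"
    using vanishes_if_isotropic_orthogonal[OF w1 ww wv v1] by (simp add: w_def add_eq_0_iff)
  then have "t \<noteq> 0" using u unfolding null_lift_def by auto
  with u_eq show ?thesis unfolding same_line_def
    by (intro exI[of _ "- 1 / t"]) (simp add: field_simps)
qed

definition mat_mult :: "nat \<Rightarrow> (nat \<Rightarrow> nat \<Rightarrow> complex) \<Rightarrow> (nat \<Rightarrow> nat \<Rightarrow> complex) \<Rightarrow> (nat \<Rightarrow> nat \<Rightarrow> complex)" where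
  "mat_mult n A B = (\<lambda>k j. \<Sum>l\<in>{1..n+1}. A k l * B l j)"

lemma mat_vec_mat_mult: "mat_vec n (mat_mult n A B) Z = mat_vec n A (mat_vec n B Z)"
proof
  fix k
  have "(\<Sum>j\<in>{1..n+1}. (\<Sum>l\<in>{1..n+1}. A k l * B l j) * Z j)
     = (\<Sum>j\<in>{1..n+1}. \<Sum>l\<in>{1..n+1}. A k l * (B l j * Z j))"
    by (simp only: sum_distrib_right mult.assoc)
  also have "\<dots> = (\<Sum>l\<in>{1..n+1}. \<Sum>j\<in>{1..n+1}. A k l * (B l j * Z j))"
    by (rule sum.swap)
  also have "\<dots> = (\<Sum>l\<in>{1..n+1}. A k l * (\<Sum>j\<in>{1..n+1}. B l j * Z j))"
    by (simp only: sum_distrib_left)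
  finally show "mat_vec n (mat_mult n A B) Z k = mat_vec n A (mat_vec n B Z) k"
    unfolding mat_vec_def mat_mult_def .
qed

lemma in_U_mat_mult: "in_U n A \<Longrightarrow> in_U n B \<Longrightarrow> in_U n (mat_mult n A B)"
  unfolding in_U_def by (simp add: mat_vec_mat_mult)

lemma mat_vec_cong: "vec_eq n Z Z' \<Longrightarrow> mat_vec n A Z = mat_vec n A Z'"
  unfolding mat_vec_def vec_eq_def by (intro ext sum.cong) auto

lemma mat_vec_scale: "mat_vec n A (\<lambda>k. a * Z k) = (\<lambda>k. a * mat_vec n A Z k)"
  unfolding mat_vec_def by (rule ext) (simp add: sum_distrib_left algebra_simps)

lemma sum_delta_mult:
  fixes n :: nat and Z :: "nat \<Rightarrow> complex"
  assumes "k \<in> {1..n+1}"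
  shows "(\<Sum>j\<in>{1..n+1}. (if k = j then a else 0) * Z j) = a * Z k"
proof -
  have "(\<Sum>j\<in>{1..n+1}. (if k = j then a else 0) * Z j) = (\<Sum>j\<in>{1..n+1}. if k = j then a * Z j else 0)"
    by (intro sum.cong) auto
  also have "\<dots> = a * Z k" using assms by (subst sum.delta') auto
  finally show ?thesis .
qed

definition scalar_mat :: "nat \<Rightarrow> complex \<Rightarrow> (nat \<Rightarrow> nat \<Rightarrow> complex)" where
  "scalar_mat n a = (\<lambda>k j. if k = j then a else 0)"

lemma mat_vec_scalar_mat: "vec_eq n (mat_vec n (scalar_mat n a) Z) (\<lambda>k. a * Z k)"
  unfolding vec_eq_def mat_vec_def scalar_mat_def by (blast intro: sum_delta_mult)

lemma in_U_scalar_mat: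
  assumes "a * cnj a = 1"
  shows "in_U n (scalar_mat n a)"
  unfolding in_U_def
proof (intro allI)
  fix Z W
  have "herm n (mat_vec n (scalar_mat n a) Z) (mat_vec n (scalar_mat n a) W)
      = herm n (\<lambda>k. a * Z k) (\<lambda>k. a * W k)"
    by (intro herm_cong mat_vec_scalar_mat)
  then show "herm n (mat_vec n (scalar_mat n a) Z) (mat_vec n (scalar_mat n a) W) = herm n Z W"
    using assms by (simp add: herm_scale_left herm_scale_right mult.assoc[symmetric])
qed

definition coord_swap :: "nat \<Rightarrow> nat \<Rightarrow> nat" where
  "coord_swap n j = (if j = 1 then n+1 else if j = n+1 then 1 else j)"

text \<open>Since \<open>herm n Z u = (\<Sum>j. Z j * cnj (u (coord_swap n j)))\<close>, this is the matrix of
  \<open>Z \<mapsto> Z + \<alpha> \<langle>Z,u\<rangle> u\<close>.\<close>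

definition reflection_mat :: "nat \<Rightarrow> (nat \<Rightarrow> complex) \<Rightarrow> complex \<Rightarrow> (nat \<Rightarrow> nat \<Rightarrow> complex)" where
  "reflection_mat n u \<alpha> = (\<lambda>k j. (if k = j then 1 else 0) + \<alpha> * u k * cnj (u (coord_swap n j)))"

lemma herm_eq_sum_coord_swap:
  fixes n :: nat
  assumes "n \<ge> 1"
  shows "(\<Sum>j\<in>{1..n+1}. cnj (u (coord_swap n j)) * Z j) = herm n Z u"
proof -
  have split: "(\<Sum>j\<in>{1..n+1}. f j) = f 1 + (\<Sum>j\<in>{2..n}. f j) + f (n+1)" for f :: "nat \<Rightarrow> complex"
    using assms by (simp add: sum.cl_ivl_Suc sum.atLeast_Suc_atMost numeral_2_eq_2)
  have "(\<Sum>j\<in>{2..n}. cnj (u (coord_swap n j)) * Z j) = (\<Sum>j\<in>{2..n}. Z j * cnj (u j))"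
    by (intro sum.cong) (auto simp: coord_swap_def)
  then show ?thesis using assms unfolding split herm_def
    by (simp add: coord_swap_def algebra_simps)
qed

lemma mat_vec_reflection_mat:
  assumes "n \<ge> 1"
  shows "vec_eq n (mat_vec n (reflection_mat n u \<alpha>) Z) (\<lambda>k. Z k + \<alpha> * herm n Z u * u k)"
  unfolding vec_eq_def
proof
  fix k assume k: "k \<in> {1..n+1}"
  have "mat_vec n (reflection_mat n u \<alpha>) Z k = (\<Sum>j\<in>{1..n+1}. (if k = j then 1 else 0) * Z j)
      + \<alpha> * u k * (\<Sum>j\<in>{1..n+1}. cnj (u (coord_swap n j)) * Z j)"
    unfolding mat_vec_def reflection_mat_def
    by (simp add: sum.distrib distrib_right sum_distrib_left algebra_simps)
  then show "mat_vec n (reflection_mat n u \<alpha>) Z k = Z k + \<alpha> * herm n Z u * u k"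
    unfolding sum_delta_mult[OF k] herm_eq_sum_coord_swap[OF assms] by simp
qed

lemma in_U_reflection_mat:
  assumes n1: "n \<ge> 1" and \<alpha>: "\<alpha> + cnj \<alpha> + \<alpha> * cnj \<alpha> * herm n u u = 0"
  shows "in_U n (reflection_mat n u \<alpha>)"
  unfolding in_U_def
proof (intro allI)
  fix Z W
  define a where "a = \<alpha> * herm n Z u"
  define b where "b = \<alpha> * herm n W u"
  have "herm n (mat_vec n (reflection_mat n u \<alpha>) Z) (mat_vec n (reflection_mat n u \<alpha>) W)
      = herm n (\<lambda>k. Z k + a * u k) (\<lambda>k. W k + b * u k)"
    unfolding a_def b_def by (intro herm_cong mat_vec_reflection_mat n1)
  also have "\<dots> = herm n Z W + cnj b * herm n Z u + a * herm n u W + a * cnj b * herm n u u"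
    by (simp add: herm_add_left herm_add_right herm_scale_left herm_scale_right algebra_simps)
  also have "\<dots> = herm n Z W + herm n Z u * cnj (herm n W u) * (\<alpha> + cnj \<alpha> + \<alpha> * cnj \<alpha> * herm n u u)"
    unfolding a_def b_def using herm_commute[of n u W] by (simp add: algebra_simps)
  also have "\<dots> = herm n Z W" using \<alpha> by simp
  finally show "herm n (mat_vec n (reflection_mat n u \<alpha>) Z) (mat_vec n (reflection_mat n u \<alpha>) W)
      = herm n Z W" .
qed

text \<open>The reflection in \<open>u = x - y\<close> with \<open>\<alpha> = -1/\<langle>x,u\<rangle>\<close>; the unitarity condition reduces to
  \<open>\<langle>u,u\<rangle> = 2 Re \<langle>x,u\<rangle>\<close>, which holds because \<open>\<langle>x,x\<rangle> = \<langle>y,y\<rangle>\<close>.\<close>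

lemma exists_reflection_map:
  assumes n1: "n \<ge> 1" and xy: "herm n x x = herm n y y"
    and nz: "Re (herm n (\<lambda>k. x k - y k) (\<lambda>k. x k - y k)) \<noteq> 0"
  shows "\<exists>R. in_U n R \<and> vec_eq n (mat_vec n R x) y \<and>
     (\<forall>z. herm n z (\<lambda>k. x k - y k) = 0 \<longrightarrow> vec_eq n (mat_vec n R z) z)"
proof -
  define u where "u = (\<lambda>k. x k - y k)"
  define w where "w = herm n x u"
  define a where "a = herm n u u"
  have "a = herm n x x - herm n x y - herm n y x + herm n y y"
    unfolding a_def u_def by (simp add: herm_diff_left herm_diff_right)
  moreover have "w = herm n x x - herm n x y" unfolding w_def u_def by (simp add: herm_diff_right)
  ultimately have a_w: "Re a = 2 * Re w"
    using herm_commute[of n y x] xy by simp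
  have "Re a \<noteq> 0" using nz unfolding a_def u_def .
  then have w0: "w \<noteq> 0" using a_w by auto
  define \<alpha> where "\<alpha> = - 1 / w"
  have "a = complex_of_real (Re a)" unfolding a_def by (rule herm_self_real)
  then have "a = w + cnj w" using a_w by (simp add: complex_add_cnj)
  then have cond: "\<alpha> + cnj \<alpha> + \<alpha> * cnj \<alpha> * herm n u u = 0"
    unfolding \<alpha>_def a_def[symmetric] using w0 by (simp add: field_simps)
  have fix_orth: "vec_eq n (mat_vec n (reflection_mat n u \<alpha>) z) z" if "herm n z u = 0" for z
    using mat_vec_reflection_mat[OF n1, of u \<alpha> z] that by simp
  have "\<alpha> * herm n x u = -1" unfolding \<alpha>_def w_def[symmetric] using w0 by simp
  then have "vec_eq n (mat_vec n (reflection_mat n u \<alpha>) x) y"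
    using mat_vec_reflection_mat[OF n1, of u \<alpha> x] by (simp add: u_def)
  with in_U_reflection_mat[OF n1 cond] fix_orth show ?thesis unfolding u_def by blast
qed

text \<open>First rotate \<open>y\<close> by a unimodular \<open>\<zeta>\<close> making \<open>\<langle>x,\<zeta> y\<rangle> \<ge> 0\<close>; then \<open>x - \<zeta> y\<close> is negative,
  so the reflection applies, and the scalar \<open>cnj \<zeta>\<close> undoes the rotation.\<close>

lemma exists_U_map_negative:
  assumes n1: "n \<ge> 1" and xy: "herm n x x = herm n y y" and neg: "Re (herm n y y) < 0"
  shows "\<exists>A. in_U n A \<and> vec_eq n (mat_vec n A x) y"
proof -
  define z where "z = herm n x y"
  define \<zeta> where "\<zeta> = (if z = 0 then 1 else z / complex_of_real (cmod z))"
  have \<zeta>_unimodular: "\<zeta> * cnj \<zeta> = 1"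
    unfolding \<zeta>_def by (auto simp: complex_norm_square[symmetric] norm_divide simp del: of_real_power)
  have "cnj \<zeta> * z = complex_of_real (cmod z)"
    unfolding \<zeta>_def by (simp add: complex_norm_square[symmetric] power2_eq_square field_simps
        del: of_real_power)
  then have xy': "herm n x (\<lambda>k. \<zeta> * y k) = complex_of_real (cmod z)"
    unfolding herm_scale_right z_def .
  have y'y': "herm n (\<lambda>k. \<zeta> * y k) (\<lambda>k. \<zeta> * y k) = herm n y y"
    unfolding herm_scale_right herm_scale_left using \<zeta>_unimodular by (simp add: algebra_simps)
  have "Re (herm n (\<lambda>k. x k - \<zeta> * y k) (\<lambda>k. x k - \<zeta> * y k)) = 2 * Re (herm n y y) - 2 * cmod z"
    using xy xy' y'y' herm_commute[of n "\<lambda>k. \<zeta> * y k" x]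
    by (simp add: herm_diff_left herm_diff_right)
  then obtain R where R: "in_U n R" "vec_eq n (mat_vec n R x) (\<lambda>k. \<zeta> * y k)"
    using exists_reflection_map[OF n1, of x "\<lambda>k. \<zeta> * y k"] xy y'y' neg norm_ge_zero[of z]
    by fastforce
  have "cnj \<zeta> * cnj (cnj \<zeta>) = 1" using \<zeta>_unimodular by (simp add: mult.commute)
  then have S: "in_U n (scalar_mat n (cnj \<zeta>))" by (rule in_U_scalar_mat)
  have "vec_eq n (mat_vec n (mat_mult n (scalar_mat n (cnj \<zeta>)) R) x) y"
    using mat_vec_scalar_mat[of n "cnj \<zeta>" "\<lambda>k. \<zeta> * y k"] \<zeta>_unimodular
    unfolding mat_vec_mat_mult mat_vec_cong[OF R(2)] vec_eq_def by (simp add: algebra_simps)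
  with in_U_mat_mult[OF S R(1)] show ?thesis by blast
qed

text \<open>One step of Witt's extension theorem: once a negative vector is among the images, the
  difference between the image of \<open>x\<close> and its target is orthogonal to all images, hence positive
  (or zero), and the reflection in it fixes everything already placed.\<close>

lemma witt_extension_step:
  fixes s t :: "'i \<Rightarrow> nat \<Rightarrow> complex"
  assumes n1: "n \<ge> 1" and A: "in_U n A"
    and A_maps: "\<forall>i\<in>I. vec_eq n (mat_vec n A (s i)) (t i)"
    and j: "j \<in> I" and neg: "Re (herm n (t j) (t j)) < 0"
    and xy: "herm n x x = herm n y y"
    and gram: "\<forall>i\<in>I. herm n x (s i) = herm n y (t i)"
  shows "\<exists>B. in_U n B \<and> (\<forall>i\<in>I. vec_eq n (mat_vec n B (s i)) (t i)) \<and> vec_eq n (mat_vec n B x) y"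
proof -
  define X where "X = mat_vec n A x"
  define u where "u = (\<lambda>k. X k - y k)"
  have XX: "herm n X X = herm n y y" using A xy unfolding X_def in_U_def by simp
  have u_orth: "herm n (t i) u = 0" if i: "i \<in> I" for i
  proof -
    have "herm n X (t i) = herm n X (mat_vec n A (s i))"
      using A_maps i by (intro herm_cong) (auto simp: vec_eq_def)
    also have "\<dots> = herm n x (s i)" using A unfolding X_def in_U_def by simp
    finally have "herm n u (t i) = 0" unfolding u_def herm_diff_left using gram i by simp
    then show ?thesis using herm_commute[of n "t i" u] by simp
  qed
  show ?thesis
  proof (cases "\<exists>k\<in>{1..n+1}. u k \<noteq> 0")
    case False
    then have "vec_eq n X y" unfolding vec_eq_def u_def by auto
    with A A_maps show ?thesis unfolding X_def by blast
  next
    case True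
    have "herm n u (t j) = 0" using u_orth[OF j] herm_commute[of n u "t j"] by simp
    then have "Re (herm n u u) > 0" using orthogonal_to_negative_imp_positive[OF neg _ True] by blast
    then obtain R where R: "in_U n R" "vec_eq n (mat_vec n R X) y"
        "\<forall>z. herm n z u = 0 \<longrightarrow> vec_eq n (mat_vec n R z) z"
      using exists_reflection_map[OF n1 XX] unfolding u_def by (metis less_irrefl)
    have "vec_eq n (mat_vec n (mat_mult n R A) (s i)) (t i)" if i: "i \<in> I" for i
      unfolding mat_vec_mat_mult mat_vec_cong[OF A_maps[rule_format, OF i]]
      using R(3) u_orth[OF i] by simp
    moreover have "vec_eq n (mat_vec n (mat_mult n R A) x) y"
      unfolding mat_vec_mat_mult X_def[symmetric] by (rule R(2))
    ultimately show ?thesis using in_U_mat_mult[OF R(1) A] by blast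
  qed
qed

lemma witt_extension:
  fixes s t :: "'i \<Rightarrow> nat \<Rightarrow> complex"
  assumes n1: "n \<ge> 1" and I: "finite I" and j: "j \<in> I"
    and gram: "\<forall>i\<in>I. \<forall>i'\<in>I. herm n (s i) (s i') = herm n (t i) (t i')"
    and neg: "Re (herm n (t j) (t j)) < 0"
  shows "\<exists>A. in_U n A \<and> (\<forall>i\<in>I. vec_eq n (mat_vec n A (s i)) (t i))"
proof -
  obtain A0 where A0: "in_U n A0" "vec_eq n (mat_vec n A0 (s j)) (t j)"
    using exists_U_map_negative[OF n1 _ neg] gram j by blast
  have "J \<subseteq> I \<Longrightarrow> \<exists>A. in_U n A \<and> (\<forall>i\<in>insert j J. vec_eq n (mat_vec n A (s i)) (t i))"
    if "finite J" for J
    using that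
  proof (induction J rule: finite_induct)
    case empty
    with A0 show ?case by blast
  next
    case (insert i J)
    then obtain A where A: "in_U n A" "\<forall>i\<in>insert j J. vec_eq n (mat_vec n A (s i)) (t i)"
      by blast
    have "\<exists>B. in_U n B \<and> (\<forall>i\<in>insert j J. vec_eq n (mat_vec n B (s i)) (t i))
        \<and> vec_eq n (mat_vec n B (s i)) (t i)"
      using insert.prems j gram
      by (intro witt_extension_step[OF n1 A(1) A(2) _ neg]) auto
    then show ?case by auto
  qed
  from this[OF I] j show ?thesis by (simp add: insert_absorb)
qed

text \<open>The family may consist of null vectors only: adjoining the difference of two of them with
  negative norm supplies the negative vector that starts the extension.\<close>

lemma exists_U_map_of_gram_eq:
  fixes s t :: "'i \<Rightarrow> nat \<Rightarrow> complex"
  assumes n1: "n \<ge> 1" and I: "finite I" and a: "a \<in> I" and b: "b \<in> I"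
    and gram: "\<forall>i\<in>I. \<forall>i'\<in>I. herm n (s i) (s i') = herm n (t i) (t i')"
    and neg: "Re (herm n (\<lambda>k. t a k - t b k) (\<lambda>k. t a k - t b k)) < 0"
  shows "\<exists>A. in_U n A \<and> (\<forall>i\<in>I. vec_eq n (mat_vec n A (s i)) (t i))"
proof -
  define adjoin :: "('i \<Rightarrow> nat \<Rightarrow> complex) \<Rightarrow> 'i option \<Rightarrow> nat \<Rightarrow> complex"
    where "adjoin f = case_option (\<lambda>k. f a k - f b k) f" for f
  have gram': "\<forall>i\<in>insert None (Some ` I). \<forall>i'\<in>insert None (Some ` I).
      herm n (adjoin s i) (adjoin s i') = herm n (adjoin t i) (adjoin t i')"
    using a b gram by (auto simp: adjoin_def herm_diff_left herm_diff_right)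
  have "\<exists>A. in_U n A \<and>
      (\<forall>i\<in>insert None (Some ` I). vec_eq n (mat_vec n A (adjoin s i)) (adjoin t i))"
    by (rule witt_extension[OF n1 _ insertI1 gram']) (use I neg in \<open>simp_all add: adjoin_def\<close>)
  then show ?thesis by (auto simp: adjoin_def)
qed

lemma distinct_boundary_quadruple_herm_self:
  "distinct_boundary_quadruple n p \<Longrightarrow> i \<in> {1..4} \<Longrightarrow> herm n (p i) (p i) = 0"
  unfolding distinct_boundary_quadruple_def null_lift_def by blast

lemma distinct_boundary_quadruple_herm_nonzero:
  assumes "distinct_boundary_quadruple n p" "i \<in> {1..4}" "j \<in> {1..4}" "i \<noteq> j"
  shows "herm n (p i) (p j) \<noteq> 0"
  using null_orthogonal_imp_same_line[of n "p i" "p j"] assms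
  unfolding distinct_boundary_quadruple_def by blast

lemma herm_scale: "herm n (\<lambda>k. a * X k) (\<lambda>k. b * Y k) = a * cnj b * herm n X Y"
  by (simp add: herm_scale_left herm_scale_right)

lemma unimodular_mult_cnj: "cmod x = 1 \<Longrightarrow> x * cnj x = 1"
  by (metis complex_norm_square of_real_1 one_power2)

lemma unimodular_cnj_inverse_eq:
  assumes "cmod x = 1" "x * cnj y = 1"
  shows "y = x"
proof -
  have "x * cnj y = x * cnj x" using assms unimodular_mult_cnj by simp
  then have "cnj y = cnj x" using assms(1) by auto
  then show ?thesis by simp
qed

lemma normalized_rescaling_const:
  fixes l :: "nat \<Rightarrow> complex"
  assumes l12: "l 1 * cnj (l 2) = 1" and l23: "l 2 * cnj (l 3) = 1" and l34: "l 3 * cnj (l 4) = 1"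
    and l13: "cmod (l 1 * cnj (l 3)) = 1"
  shows "\<forall>i\<in>{1..4}. \<forall>j\<in>{1..4}. l i * cnj (l j) = 1"
proof -
  have m: "cmod (l 1) * cmod (l 2) = 1" "cmod (l 2) * cmod (l 3) = 1" "cmod (l 1) * cmod (l 3) = 1"
    using arg_cong[OF l12, of cmod] arg_cong[OF l23, of cmod] l13 by (simp_all add: norm_mult)
  have "(cmod (l 1))\<^sup>2 = (cmod (l 1) * cmod (l 2)) * (cmod (l 1) * cmod (l 3)) / (cmod (l 2) * cmod (l 3))"
    using m(2) by (simp add: power2_eq_square)
  then have "(cmod (l 1))\<^sup>2 = 1" using m by simp
  then have m1: "cmod (l 1) = 1" by (smt (verit) norm_ge_zero power2_eq_1_iff)
  have l2: "l 2 = l 1" by (rule unimodular_cnj_inverse_eq[OF m1 l12])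
  have l3: "l 3 = l 1" using unimodular_cnj_inverse_eq[of "l 2" "l 3"] m1 l2 l23 by simp
  have l4: "l 4 = l 1" using unimodular_cnj_inverse_eq[of "l 3" "l 4"] m1 l3 l34 by simp
  have const: "l i = l 1" if "i \<in> {1..4}" for i :: nat
    using that l2 l3 l4 by (auto simp: le_Suc_eq numeral_eq_Suc)
  show ?thesis
  proof (intro ballI)
    fix i j :: nat assume "i \<in> {1..4}" "j \<in> {1..4}"
    then show "l i * cnj (l j) = 1" using const[of i] const[of j] unimodular_mult_cnj[OF m1] by simp
  qed
qed

lemma is_norm_gram_unique:
  assumes q: "distinct_boundary_quadruple n p"
    and G1: "is_norm_gram n p G1" and G2: "is_norm_gram n p G2"
  shows "G1 = G2"
proof -
  obtain c where c: "\<forall>i\<in>{1..4}. c i \<noteq> 0"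
      "\<forall>i\<in>{1..4}. \<forall>j\<in>{1..4}. G1 i j = herm n (\<lambda>k. c i * p i k) (\<lambda>k. c j * p j k)"
    using G1 unfolding is_norm_gram_def by blast
  obtain d where d: "\<forall>i\<in>{1..4}. \<forall>j\<in>{1..4}. G2 i j = herm n (\<lambda>k. d i * p i k) (\<lambda>k. d j * p j k)"
    using G2 unfolding is_norm_gram_def by blast
  define l where "l i = d i / c i" for i
  have rescale: "G2 i j = l i * cnj (l j) * G1 i j" if "i \<in> {1..4}" "j \<in> {1..4}" for i j
    using c d that by (simp add: herm_scale l_def field_simps)
  have "l 1 * cnj (l 2) = 1" "l 2 * cnj (l 3) = 1" "l 3 * cnj (l 4) = 1"
    using rescale[of 1 2] rescale[of 2 3] rescale[of 3 4] G1 G2 unfolding is_norm_gram_def by auto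
  moreover have "cmod (l 1 * cnj (l 3)) = 1"
    using arg_cong[OF rescale[of 1 3], of cmod] G1 G2 unfolding is_norm_gram_def
    by (simp add: norm_mult)
  ultimately have "\<forall>i\<in>{1..4}. \<forall>j\<in>{1..4}. l i * cnj (l j) = 1"
    by (rule normalized_rescaling_const)
  with rescale G1 G2 show ?thesis
    unfolding is_norm_gram_def by (intro ext) (metis mult_1)
qed

text \<open>Scale \<open>p\<^sub>3\<close> by a positive real \<open>r\<close> and solve \<open>g\<^sub>2\<^sub>3 = 1\<close>, \<open>g\<^sub>1\<^sub>2 = 1\<close>, \<open>g\<^sub>3\<^sub>4 = 1\<close> for the other
  factors; then \<open>|g\<^sub>1\<^sub>3| = r\<^sup>2 |a\<^sub>2\<^sub>3| |a\<^sub>1\<^sub>3| / |a\<^sub>1\<^sub>2|\<close>, which fixes \<open>r\<close>.\<close>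

lemma is_norm_gram_exists:
  assumes q: "distinct_boundary_quadruple n p"
  shows "\<exists>G. is_norm_gram n p G"
proof -
  define a12 where "a12 = herm n (p 1) (p 2)"
  define a23 where "a23 = herm n (p 2) (p 3)"
  define a34 where "a34 = herm n (p 3) (p 4)"
  define a13 where "a13 = herm n (p 1) (p 3)"
  have nz: "a12 \<noteq> 0" "a23 \<noteq> 0" "a34 \<noteq> 0" "a13 \<noteq> 0"
    unfolding a12_def a23_def a34_def a13_def
    using distinct_boundary_quadruple_herm_nonzero[OF q, of 1 2]
      distinct_boundary_quadruple_herm_nonzero[OF q, of 2 3]
      distinct_boundary_quadruple_herm_nonzero[OF q, of 3 4]
      distinct_boundary_quadruple_herm_nonzero[OF q, of 1 3] by auto
  define r where "r = sqrt (cmod a12 / (cmod a23 * cmod a13))"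
  have r: "r > 0" "r * r = cmod a12 / (cmod a23 * cmod a13)"
    unfolding r_def using nz by simp_all
  define R where "R = complex_of_real r"
  have R: "R \<noteq> 0" "cnj R = R" using r(1) unfolding R_def by simp_all
  define c :: "nat \<Rightarrow> complex" where "c i = (if i = 1 then R * cnj a23 / a12
      else if i = 2 then 1 / (R * a23) else if i = 3 then R else 1 / (R * cnj a34))" for i
  define G where "G i j = (if i \<in> {1..4} \<and> j \<in> {1..4}
      then herm n (\<lambda>k. c i * p i k) (\<lambda>k. c j * p j k) else 0)" for i j
  have c0: "\<forall>i\<in>{1..4}. c i \<noteq> 0" unfolding c_def using R nz by auto
  have G_eq: "G i j = c i * cnj (c j) * herm n (p i) (p j)" if "i \<in> {1..4}" "j \<in> {1..4}" for i j
    unfolding G_def using that by (simp add: herm_scale)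
  have G_entries: "G 1 2 = c 1 * cnj (c 2) * a12" "G 2 3 = c 2 * cnj (c 3) * a23"
      "G 3 4 = c 3 * cnj (c 4) * a34" "G 1 3 = c 1 * cnj (c 3) * a13"
    unfolding a12_def a23_def a34_def a13_def by (simp_all add: G_eq)
  have normalized: "G 1 2 = 1" "G 2 3 = 1" "G 3 4 = 1"
    using R nz unfolding G_entries by (simp_all add: c_def field_simps)
  have "G 1 3 = R * R * cnj a23 * a13 / a12"
    using R unfolding G_entries by (simp add: c_def)
  then have "cmod (G 1 3) = r * r * cmod a23 * cmod a13 / cmod a12"
    unfolding R_def using r(1) by (simp add: norm_mult norm_divide)
  then have "cmod (G 1 3) = 1" using r(2) nz by simp
  moreover have "\<forall>i\<in>{1..4}. G i i = 0"
    using G_eq distinct_boundary_quadruple_herm_self[OF q] by simp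
  ultimately have "is_norm_gram n p G"
    unfolding is_norm_gram_def using normalized c0 by (auto simp: G_def)
  then show ?thesis by blast
qed

lemma norm_gram_eqI:
  "distinct_boundary_quadruple n p \<Longrightarrow> is_norm_gram n p G \<Longrightarrow> norm_gram n p = G"
  unfolding norm_gram_def by (blast intro: is_norm_gram_unique)

lemma is_norm_gram_norm_gram:
  "distinct_boundary_quadruple n p \<Longrightarrow> is_norm_gram n p (norm_gram n p)"
  using is_norm_gram_exists norm_gram_eqI by metis

lemma conj_vec_scale: "conj_vec (\<lambda>k. a * X k) = (\<lambda>k. cnj a * conj_vec X k)"
  unfolding conj_vec_def by simp

lemma is_norm_gram_antiholo_image:
  assumes A: "in_U n A" and maps: "\<forall>i\<in>{1..4}. antiholo_maps n A (p i) (p' i)"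
    and G: "is_norm_gram n p G"
  shows "is_norm_gram n p' (\<lambda>i j. cnj (G i j))"
proof -
  obtain c where c: "\<forall>i\<in>{1..4}. c i \<noteq> 0"
      "\<forall>i\<in>{1..4}. \<forall>j\<in>{1..4}. G i j = herm n (\<lambda>k. c i * p i k) (\<lambda>k. c j * p j k)"
    using G unfolding is_norm_gram_def by blast
  obtain e where e: "\<forall>i\<in>{1..4}. e i \<noteq> 0 \<and>
      (\<forall>k\<in>{1..n+1}. p' i k = e i * mat_vec n A (conj_vec (p i)) k)"
    using maps unfolding antiholo_maps_def same_line_def by metis
  define c' where "c' i = cnj (c i) / e i" for i
  have lift: "vec_eq n (\<lambda>k. c' i * p' i k) (mat_vec n A (conj_vec (\<lambda>k. c i * p i k)))"
    if "i \<in> {1..4}" for i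
    unfolding vec_eq_def conj_vec_scale mat_vec_scale c'_def using e that by simp
  have gram: "cnj (G i j) = herm n (\<lambda>k. c' i * p' i k) (\<lambda>k. c' j * p' j k)"
    if "i \<in> {1..4}" "j \<in> {1..4}" for i j
  proof -
    have "herm n (\<lambda>k. c' i * p' i k) (\<lambda>k. c' j * p' j k)
        = herm n (conj_vec (\<lambda>k. c i * p i k)) (conj_vec (\<lambda>k. c j * p j k))"
      using herm_cong[OF lift lift] that A unfolding in_U_def by simp
    then show ?thesis unfolding herm_conj_vec using c(2) that by simp
  qed
  have "\<forall>i\<in>{1..4}. c' i \<noteq> 0" using c(1) e unfolding c'_def by simp
  with gram have "\<exists>c'. (\<forall>i\<in>{1..4}. c' i \<noteq> 0) \<and>
      (\<forall>i\<in>{1..4}. \<forall>j\<in>{1..4}. cnj (G i j) = herm n (\<lambda>k. c' i * p' i k) (\<lambda>k. c' j * p' j k))"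
    by blast
  with G show ?thesis unfolding is_norm_gram_def by simp
qed

lemma antiholo_exists_of_conj_norm_gram:
  assumes n1: "n \<ge> 1" and G: "is_norm_gram n p G" and G': "is_norm_gram n p' (\<lambda>i j. cnj (G i j))"
  shows "\<exists>A. in_U n A \<and> (\<forall>i\<in>{1..4}. antiholo_maps n A (p i) (p' i))"
proof -
  obtain c where c: "\<forall>i\<in>{1..4}. c i \<noteq> 0"
      "\<forall>i\<in>{1..4}. \<forall>j\<in>{1..4}. G i j = herm n (\<lambda>k. c i * p i k) (\<lambda>k. c j * p j k)"
    using G unfolding is_norm_gram_def by blast
  obtain c' where c': "\<forall>i\<in>{1..4}. c' i \<noteq> 0"
      "\<forall>i\<in>{1..4}. \<forall>j\<in>{1..4}. cnj (G i j) = herm n (\<lambda>k. c' i * p' i k) (\<lambda>k. c' j * p' j k)"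
    using G' unfolding is_norm_gram_def by blast
  define s where "s i = conj_vec (\<lambda>k. c i * p i k)" for i
  define t where "t i = (\<lambda>k. c' i * p' i k)" for i
  have gram: "\<forall>i\<in>{1..4}. \<forall>j\<in>{1..4}. herm n (s i) (s j) = herm n (t i) (t j)"
    unfolding s_def t_def herm_conj_vec using c(2) c'(2) by simp
  have "herm n (t 1) (t 1) = 0" "herm n (t 2) (t 2) = 0" "herm n (t 1) (t 2) = 1"
    using c'(2) G' unfolding t_def is_norm_gram_def by auto
  then have neg: "Re (herm n (\<lambda>k. t 1 k - t 2 k) (\<lambda>k. t 1 k - t 2 k)) < 0"
    using herm_commute[of n "t 2" "t 1"] by (simp add: herm_diff_left herm_diff_right)
  have "\<exists>A. in_U n A \<and> (\<forall>i\<in>{1..4}. vec_eq n (mat_vec n A (s i)) (t i))"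
    by (rule exists_U_map_of_gram_eq[OF n1 _ _ _ gram neg]) auto
  then obtain A where A: "in_U n A" "\<forall>i\<in>{1..4}. vec_eq n (mat_vec n A (s i)) (t i)"
    by blast
  have "antiholo_maps n A (p i) (p' i)" if i: "i \<in> {1..4}" for i
    unfolding antiholo_maps_def same_line_def
  proof (intro exI[of _ "cnj (c i) / c' i"] conjI ballI)
    show "cnj (c i) / c' i \<noteq> 0" using c(1) c'(1) i by simp
    fix k assume "k \<in> {1..n+1}"
    then have "c' i * p' i k = cnj (c i) * mat_vec n A (conj_vec (p i)) k"
      using A(2) i unfolding vec_eq_def s_def t_def conj_vec_scale mat_vec_scale by simp
    then show "p' i k = cnj (c i) / c' i * mat_vec n A (conj_vec (p i)) k"
      using c'(1) i by (simp add: field_simps)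
  qed
  with A(1) show ?thesis by blast
qed

theorem corollary2p2:
  fixes n :: nat and p p' :: "nat \<Rightarrow> nat \<Rightarrow> complex"
  assumes "n \<ge> 1"
    and "distinct_boundary_quadruple n p"
    and "distinct_boundary_quadruple n p'"
  shows "(\<exists>A. in_U n A \<and> (\<forall>i\<in>{1..4}. antiholo_maps n A (p i) (p' i)))
     \<longleftrightarrow> norm_gram n p' = (\<lambda>i j. cnj (norm_gram n p i j))"
proof
  assume "\<exists>A. in_U n A \<and> (\<forall>i\<in>{1..4}. antiholo_maps n A (p i) (p' i))"
  then show "norm_gram n p' = (\<lambda>i j. cnj (norm_gram n p i j))"
    using is_norm_gram_antiholo_image is_norm_gram_norm_gram[OF assms(2)] norm_gram_eqI[OF assms(3)]
    by blast
next
  assume "norm_gram n p' = (\<lambda>i j. cnj (norm_gram n p i j))"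
  then show "\<exists>A. in_U n A \<and> (\<forall>i\<in>{1..4}. antiholo_maps n A (p i) (p' i))"
    using antiholo_exists_of_conj_norm_gram[OF assms(1)] is_norm_gram_norm_gram assms(2,3)
    by metis
qed

end
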